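(* For every $\tau\in\mathbb{H}^2$, $$\theta[\tfrac15;\tfrac15]^5-\theta[\tfrac15;\tfrac35]^5+\theta[\tfrac15;1]^5-\theta[\tfrac15;\tfrac75]^5+\theta[\tfrac15;\tfrac95]^5=0,$$ and $$\theta[\tfrac35;\tfrac15]^5-\theta[\tfrac35;\tfrac35]^5+\theta[\tfrac35;1]^5-\theta[\tfrac35;\tfrac75]^5+\theta[\tfrac35;\tfrac95]^5=0.$$
   Context: Let $\mathbb{H}^2=\{\tau\in\mathbb{C}:\Im\tau>0\}$. For a characteristic $(\epsilon,\epsilon')\in\mathbb{R}^2$, the theta function with characteristic is $$\theta[\epsilon;\epsilon'](\zeta,\tau)=\sum_{n\in\mathbb{Z}}\exp\Big(2\pi i\Big[\tfrac12\big(n+\tfrac{\epsilon}{2}\big)^2\tau+\big(n+\tfrac{\epsilon}{2}\big)\big(\zeta+\tfrac{\epsilon'}{2}\big)\Big]\Big),\quad (\zeta,\tau)\in\mathbb{C}\times\mathbb{H}^2,$$ (usually written with the column $\left[\begin{smallmatrix}\epsilon\\ \epsilon'\end{smallmatrix}\right]$), and the theta constant is $\theta[\epsilon;\epsilon']=\theta[\epsilon;\epsilon'](0,\tau)$, regarded as a function of $\tau$. Here $\theta[\epsilon;\epsilon']^5$ denotes the fifth power of the theta constant. *)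

theory Defs
  imports "HOL-Analysis.Analysis"
begin

definition theta_char :: "real \<Rightarrow> real \<Rightarrow> complex \<Rightarrow> complex \<Rightarrow> complex" where
  "theta_char eps eps' zeta tau =
     (\<Sum>\<^sub>\<infinity> n::int. exp (2 * pi * \<i> *
        ((1/2) * (of_int n + of_real eps / 2)^2 * tau
         + (of_int n + of_real eps / 2) * (zeta + of_real eps' / 2))))"

definition theta_const :: "real \<Rightarrow> real \<Rightarrow> complex \<Rightarrow> complex" where
  "theta_const eps eps' tau = theta_char eps eps' 0 tau"

end

theory Submission
  imports Defs
begin

(* Expand theta[a/m; (2k+1)/m]^m as a sum over p in Z^m and put x_j = p_j + a/(2m). The alternating
   sum over k turns the term of p into exp(pi i tau |x|^2) * H(u), where H(u) = sum_k (-1)^k u^(2k+1)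
   and u = exp(pi i (sum_j x_j) / m). Because a is odd, u^(2m) = -1, so (1 + u^2) H(u) = u (1 + u^(2m))
   vanishes, and only the p with u^2 = -1, i.e. m dvd 2 sum_j p_j + a, survive. On these the orthogonal
   reflection x |-> x - (2 sum_j x_j / m) (1,...,1) acts as an involution that keeps |x|^2 and sends
   u to -u, hence H(u) to -H(u); so the whole sum is 0. The theorem is the case m = 5, a = 1, 3. *)

lemma summable_on_power_abs_int:
  fixes r :: real
  assumes "0 \<le> r" "r < 1"
  shows "(\<lambda>n::int. r ^ nat \<bar>n\<bar>) summable_on UNIV"
proof -
  have geom: "(\<lambda>k::nat. r ^ k) summable_on UNIV"
    using assms by (subst summable_on_UNIV_nonneg_real_iff) (auto intro: summable_geometric)
  have nonneg: "(\<lambda>n::int. r ^ nat \<bar>n\<bar>) summable_on range int"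
    by (subst summable_on_reindex) (use geom in \<open>auto simp: o_def\<close>)
  have neg: "(\<lambda>n::int. r ^ nat \<bar>n\<bar>) summable_on range (\<lambda>k. - int k - 1)"
  proof (subst summable_on_reindex)
    show "inj_on (\<lambda>k. - int k - 1) UNIV" by (auto simp: inj_on_def)
    have "(\<lambda>k::nat. r * r ^ k) summable_on UNIV" using geom by (rule summable_on_cmult_right)
    then show "((\<lambda>n::int. r ^ nat \<bar>n\<bar>) \<circ> (\<lambda>k. - int k - 1)) summable_on UNIV"
      by (simp add: o_def nat_add_distrib)
  qed
  have "UNIV = range int \<union> range (\<lambda>k. - int k - 1)"
    by (auto simp: image_def) presburger
  moreover have "range int \<inter> range (\<lambda>k. - int k - 1) = {}" by auto
  ultimately show ?thesis using summable_on_Un_disjoint[OF nonneg neg] by metis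
qed

lemma abs_int_le_square: "\<bar>n\<bar> \<le> (n::int)^2"
proof (cases "n = 0")
  case False
  then have "\<bar>n\<bar> * 1 \<le> \<bar>n\<bar> * \<bar>n\<bar>" by (intro mult_left_mono) auto
  then show ?thesis by (simp add: power2_eq_square abs_mult[symmetric])
qed simp

lemma half_abs_le_square_shift: "real_of_int \<bar>n\<bar> / 2 - d^2 \<le> (of_int n + d)^2"
proof -
  have "real_of_int \<bar>n\<bar> \<le> (of_int n)^2"
    using abs_int_le_square[of n] by (metis of_int_le_iff of_int_power)
  moreover have "0 \<le> (of_int n + 2*d)^2" by simp
  ultimately show ?thesis by (simp add: power2_eq_square algebra_simps)
qed

lemma sum_squares_shift_eq:
  fixes x :: "'a \<Rightarrow> 'b::comm_ring_1"
  assumes "of_nat (card I) * t = 2 * (\<Sum>i\<in>I. x i)"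
  shows "(\<Sum>i\<in>I. (x i - t)^2) = (\<Sum>i\<in>I. (x i)^2)"
proof -
  have "(\<Sum>i\<in>I. (x i - t)^2) = (\<Sum>i\<in>I. (x i)^2) - t * (2 * (\<Sum>i\<in>I. x i) - of_nat (card I) * t)"
    by (simp add: power2_diff sum.distrib sum_subtractf sum_distrib_left sum_distrib_right
                  algebra_simps power2_eq_square)
  with assms show ?thesis by simp
qed

lemma has_sum_sum:
  fixes f :: "'i \<Rightarrow> 'a \<Rightarrow> 'b::{topological_comm_monoid_add}"
  assumes "finite I" "\<And>i. i \<in> I \<Longrightarrow> (f i has_sum s i) A"
  shows "((\<lambda>x. \<Sum>i\<in>I. f i x) has_sum (\<Sum>i\<in>I. s i)) A"
  using assms by (induction I rule: finite_induct) (auto intro: has_sum_add)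

lemma infsum_eq_0_if_negated_by_involution:
  fixes f :: "'a \<Rightarrow> 'b::real_normed_vector"
  assumes "\<And>x. x \<in> A \<Longrightarrow> r x \<in> A" "\<And>x. x \<in> A \<Longrightarrow> r (r x) = x"
      and "\<And>x. x \<in> A \<Longrightarrow> f (r x) = - f x"
  shows "infsum f A = 0"
proof -
  have "infsum f A = infsum (\<lambda>x. - f x) A"
    by (rule infsum_reindex_bij_witness[of A r r]) (simp_all add: assms)
  also have "\<dots> = - infsum f A" by (rule infsum_uminus)
  finally have "infsum f A + infsum f A = 0" by (metis right_minus)
  then have "2 *\<^sub>R infsum f A = 0" by (simp only: scaleR_2)
  then show ?thesis by simp
qed

definition alternating_odd_powers :: "nat \<Rightarrow> 'a::comm_ring_1 \<Rightarrow> 'a" where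
  "alternating_odd_powers m u = (\<Sum>k<m. (-1)^k * u^(2*k+1))"

lemma alternating_odd_powers_minus:
  "alternating_odd_powers m (-u) = - alternating_odd_powers m u"
  by (simp add: alternating_odd_powers_def sum_negf[symmetric])

lemma alternating_odd_powers_eq_0:
  fixes u :: "'a::idom"
  assumes "odd m" "u^(2*m) = -1" "u^2 \<noteq> -1"
  shows "alternating_odd_powers m u = 0"
proof -
  have "(-1)^k * u^(2*k+1) = u * (- (u^2))^k" for k
    by (simp add: power_minus' power_mult)
  then have "alternating_odd_powers m u = u * (\<Sum>k<m. (- (u^2))^k)"
    by (simp only: alternating_odd_powers_def sum_distrib_left)
  then have "(1 + u^2) * alternating_odd_powers m u = u * ((1 - (- (u^2))) * (\<Sum>k<m. (- (u^2))^k))"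
    by (simp add: algebra_simps)
  also have "\<dots> = u * (1 - (- (u^2))^m)"
    by (simp only: one_diff_power_eq)
  also have "(- (u^2))^m = -(u^(2*m))"
    using assms(1) by (simp add: power_mult)
  finally have "(1 + u^2) * alternating_odd_powers m u = 0"
    using assms(2) by simp
  moreover have "1 + u^2 \<noteq> 0"
    using assms(3) by (metis add_eq_0_iff add.commute)
  ultimately show ?thesis by simp
qed

lemma exp_pi_i_squared_eq_minus_one_iff:
  "exp (pi * \<i> * of_real x)^2 = -1 \<longleftrightarrow> (\<exists>k::int. x = of_int k + 1/2)"
proof -
  have "exp (pi * \<i> * of_real x)^2 = exp (of_real (2 * pi * x) * \<i>)"
    by (simp add: exp_of_nat_mult[symmetric] algebra_simps)
  then have "exp (pi * \<i> * of_real x)^2 = -1 \<longleftrightarrow>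
             exp (of_real (2 * pi * x) * \<i>) = exp (of_real pi * \<i>)"
    by simp
  also have "\<dots> \<longleftrightarrow> (\<exists>k::int. of_real (2 * pi * x) * \<i> = of_real pi * \<i> + of_int (2 * k) * pi * \<i>)"
    by (rule exp_eq)
  also have "\<dots> \<longleftrightarrow> (\<exists>k::int. 2 * pi * x = pi + 2 * of_int k * pi)"
    by (simp add: complex_eq_iff)
  also have "\<dots> \<longleftrightarrow> (\<exists>k::int. x = of_int k + 1/2)"
  proof -
    have "2 * pi * x = pi + 2 * of_int k * pi \<longleftrightarrow> x = of_int k + 1/2" for k :: int
    proof -
      have "2 * pi * x = pi + 2 * of_int k * pi \<longleftrightarrow> pi * (2 * x) = pi * (1 + 2 * of_int k)"
        by (simp add: algebra_simps)
      also have "\<dots> \<longleftrightarrow> 2 * x = 1 + 2 * of_int k"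
        by (rule mult_left_cancel) simp
      finally show ?thesis by linarith
    qed
    then show ?thesis by (simp only:)
  qed
  finally show ?thesis .
qed

lemma exp_half_integer_phase_squared_eq_minus_one_iff:
  assumes "m > 0"
  shows "exp (pi * \<i> * of_real (of_int s / 2 / real m))^2 = -1 \<longleftrightarrow> (\<exists>k. s = int m * (2 * k + 1))"
proof -
  have "of_int s / 2 / real m = of_int k + 1/2 \<longleftrightarrow> s = int m * (2 * k + 1)" for k
  proof -
    have "of_int s / 2 / real m = of_int k + 1/2 \<longleftrightarrow> real_of_int s = real_of_int (int m * (2 * k + 1))"
      using assms by (simp add: field_simps)
    then show ?thesis by (simp only: of_int_eq_iff)
  qed
  then show ?thesis by (simp only: exp_pi_i_squared_eq_minus_one_iff)
qed

lemma exp_pi_i_power: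
  assumes "m > 0"
  shows "exp (pi * \<i> * of_real (x / real m))^m = exp (pi * \<i> * of_real x)"
  using assms by (simp add: exp_of_nat_mult[symmetric])

definition theta_term :: "real \<Rightarrow> real \<Rightarrow> complex \<Rightarrow> int \<Rightarrow> complex" where
  "theta_term e e' tau n =
     exp (pi * \<i> * tau * of_real ((of_int n + e/2)^2) + pi * \<i> * of_real (e' * (of_int n + e/2)))"

lemma theta_const_eq_infsum: "theta_const e e' tau = (\<Sum>\<^sub>\<infinity>n. theta_term e e' tau n)"
  unfolding theta_const_def theta_char_def theta_term_def
  by (simp add: algebra_simps power2_eq_square)

lemma norm_theta_term: "norm (theta_term e e' tau n) = exp (- pi * Im tau * (of_int n + e/2)^2)"
  by (simp add: theta_term_def)

lemma summable_on_norm_theta_term: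
  assumes "Im tau > 0"
  shows "(\<lambda>n. norm (theta_term e e' tau n)) summable_on UNIV"
proof -
  define c where "c = pi * Im tau"
  define d where "d = e/2"
  have "c > 0" using assms by (simp add: c_def)
  have majorant: "(\<lambda>n::int. exp (c * d^2) * exp (-c/2) ^ nat \<bar>n\<bar>) summable_on UNIV"
    by (intro summable_on_cmult_right summable_on_power_abs_int) (use \<open>c > 0\<close> in auto)
  show ?thesis
  proof (rule summable_on_comparison_test[OF majorant])
    fix n :: int
    have "- c * (of_int n + d)^2 \<le> c * d^2 + real (nat \<bar>n\<bar>) * (-c/2)"
      using mult_left_mono[OF half_abs_le_square_shift[of n d], of c] \<open>c > 0\<close>
      by (simp add: algebra_simps)
    then have "exp (- c * (of_int n + d)^2) \<le> exp (c * d^2) * exp (-c/2) ^ nat \<bar>n\<bar>"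
      by (simp only: exp_of_nat_mult[symmetric] exp_add[symmetric] exp_le_cancel_iff)
    then show "norm (theta_term e e' tau n) \<le> exp (c * d^2) * exp (-c/2) ^ nat \<bar>n\<bar>"
      by (simp add: norm_theta_term c_def d_def)
  qed simp
qed

lemma theta_const_power_eq_infsum:
  assumes "Im tau > 0"
  shows "theta_const e e' tau ^ m =
           (\<Sum>\<^sub>\<infinity>p\<in>PiE {..<m} (\<lambda>_. UNIV). \<Prod>j<m. theta_term e e' tau (p j))"
proof -
  have "(\<Sum>\<^sub>\<infinity>p\<in>PiE {..<m} (\<lambda>_. UNIV). \<Prod>j<m. theta_term e e' tau (p j))
          = (\<Prod>j<m. \<Sum>\<^sub>\<infinity>n. theta_term e e' tau n)"
    by (rule infsum_prod_PiE_abs) (use summable_on_norm_theta_term[OF assms] in auto)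
  then show ?thesis by (simp add: theta_const_eq_infsum)
qed

lemma summable_on_prod_theta_term:
  fixes m :: nat
  assumes "Im tau > 0"
  shows "(\<lambda>p. \<Prod>j<m. theta_term e e' tau (p j)) summable_on PiE {..<m} (\<lambda>_. UNIV)"
proof -
  have "(\<lambda>p. norm (\<Prod>j<m. theta_term e e' tau (p j))) summable_on PiE {..<m} (\<lambda>_. UNIV)"
    unfolding abs_summable_equivalent
    by (rule abs_summable_on_prod_PiE)
       (use summable_on_norm_theta_term[OF assms] in \<open>auto simp flip: abs_summable_equivalent\<close>)
  then show ?thesis by (rule abs_summable_summable)
qed

definition shifted_sum :: "real \<Rightarrow> nat \<Rightarrow> (nat \<Rightarrow> int) \<Rightarrow> real" where
  "shifted_sum e m p = (\<Sum>j<m. of_int (p j) + e/2)"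

definition shifted_square_sum :: "real \<Rightarrow> nat \<Rightarrow> (nat \<Rightarrow> int) \<Rightarrow> real" where
  "shifted_square_sum e m p = (\<Sum>j<m. (of_int (p j) + e/2)^2)"

lemma prod_theta_term:
  "(\<Prod>j<m. theta_term e e' tau (p j)) =
     exp (pi * \<i> * tau * of_real (shifted_square_sum e m p) + pi * \<i> * of_real (e' * shifted_sum e m p))"
proof -
  define x where "x j = of_int (p j) + e/2" for j
  have "(\<Prod>j<m. theta_term e e' tau (p j)) =
          exp (\<Sum>j<m. pi * \<i> * tau * of_real ((x j)^2) + pi * \<i> * of_real (e' * x j))"
    by (simp add: theta_term_def x_def exp_sum)
  also have "\<dots> = exp (pi * \<i> * tau * of_real (\<Sum>j<m. (x j)^2) + pi * \<i> * of_real (e' * (\<Sum>j<m. x j)))"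
    by (simp only: sum.distrib sum_distrib_left of_real_sum)
  finally show ?thesis by (simp only: shifted_sum_def shifted_square_sum_def x_def)
qed

lemma shifted_sum_characteristic:
  assumes "m > 0"
  shows "shifted_sum (of_int a / real m) m p = of_int (2 * (\<Sum>j<m. p j) + a) / 2"
  using assms by (simp add: shifted_sum_def sum.distrib)

lemma shifted_sum_shift:
  "shifted_sum e m (\<lambda>j\<in>{..<m}. p j - t) = shifted_sum e m p - real m * of_int t"
  by (simp add: shifted_sum_def sum.distrib sum_subtractf)

lemma shifted_square_sum_shift:
  assumes "real m * of_int t = 2 * shifted_sum e m p"
  shows "shifted_square_sum e m (\<lambda>j\<in>{..<m}. p j - t) = shifted_square_sum e m p"
proof -
  have "(\<Sum>j<m. (of_int (p j) + e/2 - of_int t)^2) = (\<Sum>j<m. (of_int (p j) + e/2)^2)"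
    by (rule sum_squares_shift_eq) (use assms in \<open>simp add: shifted_sum_def\<close>)
  then show ?thesis by (simp add: shifted_square_sum_def algebra_simps)
qed

definition theta_alternating_summand :: "int \<Rightarrow> nat \<Rightarrow> complex \<Rightarrow> (nat \<Rightarrow> int) \<Rightarrow> complex" where
  "theta_alternating_summand a m tau p =
     (\<Sum>k<m. (-1)^k * (\<Prod>j<m. theta_term (of_int a / real m) ((2 * real k + 1) / real m) tau (p j)))"

lemma theta_alternating_summand_eq:
  "theta_alternating_summand a m tau p =
     exp (pi * \<i> * tau * of_real (shifted_square_sum (of_int a / real m) m p)) *
     alternating_odd_powers m (exp (pi * \<i> * of_real (shifted_sum (of_int a / real m) m p / real m)))"
proof -
  have odd_phase: "exp (pi * \<i> * of_real ((2 * real k + 1) / real m * L)) = exp (pi * \<i> * of_real (L / real m)) ^ (2*k+1)"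
    for k L
  proof -
    have "pi * \<i> * of_real ((2 * real k + 1) / real m * L) = of_nat (2*k+1) * (pi * \<i> * of_real (L / real m))"
      by simp
    then show ?thesis by (simp only: exp_of_nat_mult)
  qed
  show ?thesis
    unfolding theta_alternating_summand_def alternating_odd_powers_def prod_theta_term exp_add
      odd_phase
    by (simp only: sum_distrib_left mult_ac)
qed

(* The reflection of the header, written on p. *)
definition theta_reflection :: "int \<Rightarrow> nat \<Rightarrow> (nat \<Rightarrow> int) \<Rightarrow> (nat \<Rightarrow> int)" where
  "theta_reflection a m p =
     (if int m dvd 2 * (\<Sum>j<m. p j) + a
      then (\<lambda>j\<in>{..<m}. p j - (2 * (\<Sum>j<m. p j) + a) div int m) else p)"

lemma theta_reflection_in_PiE:
  "p \<in> PiE {..<m} (\<lambda>_. UNIV) \<Longrightarrow> theta_reflection a m p \<in> PiE {..<m} (\<lambda>_. UNIV)"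
  by (simp add: theta_reflection_def)

lemma theta_reflection_shift:
  assumes "2 * (\<Sum>j<m. p j) + a = int m * t" "m > 0"
  shows "theta_reflection a m p = (\<lambda>j\<in>{..<m}. p j - t)"
  using assms by (simp add: theta_reflection_def)

lemma theta_reflection_involution:
  assumes "p \<in> PiE {..<m} (\<lambda>_. UNIV)" "m > 0"
  shows "theta_reflection a m (theta_reflection a m p) = p"
proof (cases "int m dvd 2 * (\<Sum>j<m. p j) + a")
  case True
  then obtain t where t: "2 * (\<Sum>j<m. p j) + a = int m * t" by blast
  let ?q = "\<lambda>j\<in>{..<m}. p j - t"
  have "2 * (\<Sum>j<m. ?q j) + a = int m * (- t)"
    using t by (simp add: sum_subtractf algebra_simps)
  then have "theta_reflection a m ?q = (\<lambda>j\<in>{..<m}. ?q j - (- t))"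
    using assms(2) by (rule theta_reflection_shift)
  also have "\<dots> = p"
  proof
    fix j
    show "(\<lambda>j\<in>{..<m}. ?q j - (- t)) j = p j"
      by (cases "j < m") (simp_all add: PiE_arb[OF assms(1)])
  qed
  finally show ?thesis using theta_reflection_shift[OF t assms(2)] by simp
next
  case False
  then show ?thesis by (simp add: theta_reflection_def)
qed

lemma exp_shifted_sum_squared_eq_minus_one_iff:
  assumes "m > 0"
  shows "exp (pi * \<i> * of_real (shifted_sum (of_int a / real m) m p / real m))^2 = -1
           \<longleftrightarrow> (\<exists>k. 2 * (\<Sum>j<m. p j) + a = int m * (2 * k + 1))"
  unfolding shifted_sum_characteristic[OF assms]
  using assms by (rule exp_half_integer_phase_squared_eq_minus_one_iff)

lemma theta_alternating_summand_eq_0: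
  assumes "odd a" "odd m" "\<not> int m dvd 2 * (\<Sum>j<m. p j) + a"
  shows "theta_alternating_summand a m tau p = 0"
proof -
  define s where "s = 2 * (\<Sum>j<m. p j) + a"
  define u where "u = exp (pi * \<i> * of_real (shifted_sum (of_int a / real m) m p / real m))"
  have "m > 0" using \<open>odd m\<close> by (simp add: odd_pos)
  from \<open>odd a\<close> have "odd s" by (simp add: s_def)
  then obtain k where "s = 2 * k + 1" by (rule oddE)
  then have "exp (pi * \<i> * of_real (of_int s / 2))^2 = -1"
    using exp_half_integer_phase_squared_eq_minus_one_iff[of 1 s] by auto
  moreover have "u^(2*m) = (u^m)^2"
    by (simp only: mult.commute[of 2 m] power_mult)
  moreover have "u^m = exp (pi * \<i> * of_real (of_int s / 2))"
    unfolding u_def shifted_sum_characteristic[OF \<open>m > 0\<close>] s_def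
    using \<open>m > 0\<close> by (rule exp_pi_i_power)
  ultimately have "u^(2*m) = -1" by simp
  moreover have "u^2 \<noteq> -1"
    using exp_shifted_sum_squared_eq_minus_one_iff[OF \<open>m > 0\<close>] assms(3) by (auto simp: u_def)
  ultimately have "alternating_odd_powers m u = 0"
    using \<open>odd m\<close> by (intro alternating_odd_powers_eq_0)
  then show ?thesis by (simp add: theta_alternating_summand_eq u_def)
qed

lemma theta_alternating_summand_reflection_dvd:
  assumes "odd a" "m > 0" "2 * (\<Sum>j<m. p j) + a = int m * t"
  shows "theta_alternating_summand a m tau (theta_reflection a m p) = - theta_alternating_summand a m tau p"
proof -
  define e where "e = of_int a / real m"
  define u where "u = exp (pi * \<i> * of_real (shifted_sum e m p / real m))"
  have L: "shifted_sum e m p = of_int (int m * t) / 2"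
    unfolding e_def assms(3)[symmetric] using \<open>m > 0\<close> by (rule shifted_sum_characteristic)
  from \<open>odd a\<close> have "odd t" using assms(3) by (metis even_add even_mult_iff dvd_triv_left)
  then obtain k where "t = 2 * k + 1" by (rule oddE)
  then have "u^2 = -1"
    using exp_shifted_sum_squared_eq_minus_one_iff[OF \<open>m > 0\<close>] assms(3) by (auto simp: u_def e_def)
  then have "inverse u = - u" by (intro inverse_unique) (simp add: power2_eq_square)
  have refl: "theta_reflection a m p = (\<lambda>j\<in>{..<m}. p j - t)"
    using assms(3,2) by (rule theta_reflection_shift)
  have "real m * of_int t = 2 * shifted_sum e m p"
    by (simp add: L)
  then have square_sum: "shifted_square_sum e m (theta_reflection a m p) = shifted_square_sum e m p"
    unfolding refl by (rule shifted_square_sum_shift)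
  have "shifted_sum e m (theta_reflection a m p) = - shifted_sum e m p"
    unfolding refl shifted_sum_shift by (simp add: L)
  then have phase: "exp (pi * \<i> * of_real (shifted_sum e m (theta_reflection a m p) / real m)) = - u"
    using \<open>inverse u = - u\<close> by (simp add: u_def exp_minus[symmetric])
  show ?thesis
    using square_sum phase
    by (simp add: theta_alternating_summand_eq alternating_odd_powers_minus u_def flip: e_def)
qed

lemma theta_alternating_summand_reflection:
  assumes "odd a" "odd m"
  shows "theta_alternating_summand a m tau (theta_reflection a m p) = - theta_alternating_summand a m tau p"
proof (cases "int m dvd 2 * (\<Sum>j<m. p j) + a")
  case True
  then obtain t where "2 * (\<Sum>j<m. p j) + a = int m * t" by blast
  with \<open>odd a\<close> odd_pos[OF \<open>odd m\<close>] show ?thesis by (rule theta_alternating_summand_reflection_dvd)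
next
  case False
  then show ?thesis
    using theta_alternating_summand_eq_0[OF assms False] by (simp add: theta_reflection_def)
qed

lemma alternating_theta_power_sum_eq_0:
  assumes "odd a" "odd m" "Im tau > 0"
  shows "(\<Sum>k<m. (-1)^k * theta_const (of_int a / real m) ((2 * real k + 1) / real m) tau ^ m) = 0"
proof -
  define P where "P = PiE {..<m} (\<lambda>_. UNIV :: int set)"
  have "((\<lambda>p. (-1)^k * (\<Prod>j<m. theta_term (of_int a / real m) ((2 * real k + 1) / real m) tau (p j)))
          has_sum (-1)^k * theta_const (of_int a / real m) ((2 * real k + 1) / real m) tau ^ m) P" for k
    unfolding theta_const_power_eq_infsum[OF \<open>Im tau > 0\<close>] P_def
    by (intro has_sum_cmult_right has_sum_infsum summable_on_prod_theta_term \<open>Im tau > 0\<close>)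
  then have "(theta_alternating_summand a m tau has_sum
               (\<Sum>k<m. (-1)^k * theta_const (of_int a / real m) ((2 * real k + 1) / real m) tau ^ m)) P"
    unfolding theta_alternating_summand_def by (intro has_sum_sum) auto
  then have "(\<Sum>k<m. (-1)^k * theta_const (of_int a / real m) ((2 * real k + 1) / real m) tau ^ m)
               = infsum (theta_alternating_summand a m tau) P"
    by (simp add: infsumI)
  also have "\<dots> = 0"
  proof (rule infsum_eq_0_if_negated_by_involution)
    fix p assume "p \<in> P"
    then have p: "p \<in> PiE {..<m} (\<lambda>_. UNIV)" by (simp add: P_def)
    then show "theta_reflection a m p \<in> P" by (simp add: P_def theta_reflection_in_PiE)
    show "theta_reflection a m (theta_reflection a m p) = p"
      using p odd_pos[OF \<open>odd m\<close>] by (rule theta_reflection_involution)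
    show "theta_alternating_summand a m tau (theta_reflection a m p) = - theta_alternating_summand a m tau p"
      using \<open>odd a\<close> \<open>odd m\<close> by (rule theta_alternating_summand_reflection)
  qed
  finally show ?thesis .
qed

theorem theorem3p1:
  fixes tau :: complex
  assumes "Im tau > 0"
  shows "theta_const (1/5) (1/5) tau ^ 5 - theta_const (1/5) (3/5) tau ^ 5
           + theta_const (1/5) 1 tau ^ 5 - theta_const (1/5) (7/5) tau ^ 5
           + theta_const (1/5) (9/5) tau ^ 5 = 0
       \<and> theta_const (3/5) (1/5) tau ^ 5 - theta_const (3/5) (3/5) tau ^ 5
           + theta_const (3/5) 1 tau ^ 5 - theta_const (3/5) (7/5) tau ^ 5
           + theta_const (3/5) (9/5) tau ^ 5 = 0"
proof -
  have sum5: "(\<Sum>k<5. f k) = f 0 + f 1 + f 2 + f 3 + f (4::nat)" for f :: "nat \<Rightarrow> complex"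
    by (simp add: eval_nat_numeral)
  have "odd (5::nat)" "odd (1::int)" "odd (3::int)" by simp_all
  then show ?thesis
    using alternating_theta_power_sum_eq_0[of 1 5 tau] alternating_theta_power_sum_eq_0[of 3 5 tau] assms
    unfolding sum5 by simp
qed

end
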